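(* For any $\alpha\in(0,1)$ and any $q>0$ there exist positive definite $2\times2$ matrices $A,B$ such that $LE_\alpha(A,B)\not\le\mathcal{A}_{\alpha,q}(A,B)$, where $LE_\alpha(A,B):=\exp((1-\alpha)\log A+\alpha\log B)$ and $\mathcal{A}_{\alpha,q}(A,B):=((1-\alpha)A^q+\alpha B^q)^{1/q}$.
   Context: $\le$ denotes the Loewner order on Hermitian matrices ($X\le Y$ iff $Y-X$ is positive semidefinite). *)

theory Defs
  imports "HOL-Analysis.Analysis"
begin

definition adjoint_mat :: "complex^'n^'m \<Rightarrow> complex^'m^'n" where
  "adjoint_mat A = (\<chi> i j. cnj (A $ j $ i))"

definition hermitian_mat :: "complex^'n^'n \<Rightarrow> bool" where
  "hermitian_mat A \<longleftrightarrow> adjoint_mat A = A"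

definition unitary_mat :: "complex^'n^'n \<Rightarrow> bool" where
  "unitary_mat U \<longleftrightarrow> adjoint_mat U ** U = mat 1"

definition diag_mat :: "('n::finite \<Rightarrow> complex) \<Rightarrow> complex^'n^'n" where
  "diag_mat d = (\<chi> i j. if i = j then d i else 0)"

definition qform :: "complex^'n^'n \<Rightarrow> complex^'n \<Rightarrow> complex" where
  "qform M v = (\<Sum>i\<in>UNIV. cnj (v $ i) * (M *v v) $ i)"

definition posdef_mat :: "complex^'n^'n \<Rightarrow> bool" where
  "posdef_mat A \<longleftrightarrow> hermitian_mat A \<and> (\<forall>v. v \<noteq> 0 \<longrightarrow> Re (qform A v) > 0)"

definition psd_mat :: "complex^'n^'n \<Rightarrow> bool" where
  "psd_mat A \<longleftrightarrow> hermitian_mat A \<and> (\<forall>v. Re (qform A v) \<ge> 0)"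

definition loewner_le :: "complex^'n^'n \<Rightarrow> complex^'n^'n \<Rightarrow> bool" where
  "loewner_le X Y \<longleftrightarrow> psd_mat (Y - X)"

text \<open>Functional calculus for Hermitian matrices via spectral decomposition
  A = U diag(d) U^*: f(A) = U diag(f o d) U^* (independent of the decomposition).\<close>
definition mat_fun :: "(real \<Rightarrow> real) \<Rightarrow> complex^'n^'n \<Rightarrow> complex^'n^'n" where
  "mat_fun f A = (SOME M. \<exists>U (d::'n \<Rightarrow> real). unitary_mat U \<and>
      A = U ** diag_mat (\<lambda>i. complex_of_real (d i)) ** adjoint_mat U \<and>
      M = U ** diag_mat (\<lambda>i. complex_of_real (f (d i))) ** adjoint_mat U)"

definition mat_exp :: "complex^'n^'n \<Rightarrow> complex^'n^'n" where
  "mat_exp A = mat_fun exp A"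

definition mat_log :: "complex^'n^'n \<Rightarrow> complex^'n^'n" where
  "mat_log A = mat_fun ln A"

definition mat_powr :: "complex^'n^'n \<Rightarrow> real \<Rightarrow> complex^'n^'n" where
  "mat_powr A p = mat_fun (\<lambda>x. x powr p) A"

definition LE_mean :: "real \<Rightarrow> complex^'n^'n \<Rightarrow> complex^'n^'n \<Rightarrow> complex^'n^'n" where
  "LE_mean \<alpha> A B = mat_exp ((1 - \<alpha>) *\<^sub>R mat_log A + \<alpha> *\<^sub>R mat_log B)"

definition power_mean :: "real \<Rightarrow> real \<Rightarrow> complex^'n^'n \<Rightarrow> complex^'n^'n \<Rightarrow> complex^'n^'n" where
  "power_mean \<alpha> q A B = mat_powr ((1 - \<alpha>) *\<^sub>R mat_powr A q + \<alpha> *\<^sub>R mat_powr B q) (1 / q)"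

end

theory Submission
  imports Defs
begin

(* Take A = diag(1, e^-L) and B = R diag(e^(m+t), e^(m-t)) R^T, with R the rotation by pi/4.
   If (1 - alpha) L = 8 alpha t, the exponent (1 - alpha) log A + alpha log B is
   alpha [[m, t], [t, m - 8t]]: its top eigenvalue is at least alpha m and its top eigenvector
   is at an angle theta_Z from e_1 with |sin 2 theta_Z| <= 1/4. In S = (1 - alpha) A^q + alpha B^q
   the off-diagonal entry grows with t while the diagonal entries differ by at most 1, so the
   eigenvectors of S are at an angle theta_S with |cos 2 theta_S| <= 1/4, and the smaller
   eigenvalue of S, being at most the Rayleigh quotient at (1, -1), stays below 2.
   At the bottom eigenvector v of S the power mean gives v* A_(alpha,q) v <= 2^(1/q), whereas
   v* LE_alpha v >= e^(alpha m) sin^2 (theta_S - theta_Z) >= e^(alpha m) / 4, which is larger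
   once m is large. *)

section \<open>Unitary diagonalisation and the functional calculus\<close>

lemma matrix_mul_diag_mat_nth: "(W ** diag_mat g) $ i $ j = W $ i $ j * g j"
  unfolding diag_mat_def matrix_matrix_mult_def
  by (simp add: if_distrib[of "\<lambda>x. _ * x"] cong: if_cong)

lemma diag_mat_mul_nth: "(diag_mat g ** W) $ i $ j = g i * W $ i $ j"
  unfolding diag_mat_def matrix_matrix_mult_def
  by (simp add: if_distrib[of "\<lambda>x. x * _"] cong: if_cong)

lemma unitary_mat_right_inverse:
  assumes "unitary_mat U" shows "U ** adjoint_mat U = mat 1"
  using assms matrix_left_right_inverse unfolding unitary_mat_def by blast

lemma diag_mat_intertwining_fun:
  fixes W :: "complex^'n^'n" and d e :: "'n \<Rightarrow> real"
  assumes "W ** diag_mat (\<lambda>i. complex_of_real (d i)) = diag_mat (\<lambda>i. complex_of_real (e i)) ** W"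
  shows "W ** diag_mat (\<lambda>i. complex_of_real (f (d i))) = diag_mat (\<lambda>i. complex_of_real (f (e i))) ** W"
proof -
  have "W $ i $ j * complex_of_real (f (d j)) = complex_of_real (f (e i)) * W $ i $ j" for i j
  proof -
    have "W $ i $ j * complex_of_real (d j) = complex_of_real (e i) * W $ i $ j"
      using arg_cong[OF assms, of "\<lambda>M. M $ i $ j"] by (simp only: matrix_mul_diag_mat_nth diag_mat_mul_nth)
    then have "W $ i $ j = 0 \<or> d j = e i"
      by (metis mult.commute mult_cancel_left of_real_eq_iff)
    then show ?thesis by (auto simp: mult.commute)
  qed
  then show ?thesis
    by (simp add: vec_eq_iff matrix_mul_diag_mat_nth diag_mat_mul_nth)
qed

lemma unitary_diag_conj_fun_unique:
  fixes U V :: "complex^'n^'n" and d e :: "'n \<Rightarrow> real"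
  assumes U: "unitary_mat U" and V: "unitary_mat V"
    and eq: "U ** diag_mat (\<lambda>i. complex_of_real (d i)) ** adjoint_mat U =
             V ** diag_mat (\<lambda>i. complex_of_real (e i)) ** adjoint_mat V"
  shows "U ** diag_mat (\<lambda>i. complex_of_real (f (d i))) ** adjoint_mat U =
         V ** diag_mat (\<lambda>i. complex_of_real (f (e i))) ** adjoint_mat V"
proof -
  define W where "W = adjoint_mat V ** U"
  have UU: "adjoint_mat U ** U = mat 1" and VV: "adjoint_mat V ** V = mat 1"
    using U V unfolding unitary_mat_def by auto
  have UU': "U ** adjoint_mat U = mat 1" and VV': "V ** adjoint_mat V = mat 1"
    using U V by (auto intro: unitary_mat_right_inverse)
  let ?Dd = "diag_mat (\<lambda>i. complex_of_real (d i))" and ?De = "diag_mat (\<lambda>i. complex_of_real (e i))"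
  let ?Fd = "diag_mat (\<lambda>i. complex_of_real (f (d i)))" and ?Fe = "diag_mat (\<lambda>i. complex_of_real (f (e i)))"
  have "W ** ?Dd = adjoint_mat V ** U ** ?Dd ** (adjoint_mat U ** U)"
    unfolding W_def by (simp add: UU)
  also have "\<dots> = adjoint_mat V ** (U ** ?Dd ** adjoint_mat U) ** U"
    by (simp add: matrix_mul_assoc)
  also have "\<dots> = (adjoint_mat V ** V) ** ?De ** W"
    unfolding eq W_def by (simp add: matrix_mul_assoc)
  finally have "W ** ?Dd = ?De ** W"
    by (simp add: VV)
  then have WF: "W ** ?Fd = ?Fe ** W"
    by (rule diag_mat_intertwining_fun)
  have "U ** ?Fd ** adjoint_mat U = (V ** adjoint_mat V) ** U ** ?Fd ** adjoint_mat U"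
    by (simp add: VV')
  also have "\<dots> = V ** (W ** ?Fd) ** adjoint_mat U"
    unfolding W_def by (simp add: matrix_mul_assoc)
  also have "\<dots> = V ** ?Fe ** adjoint_mat V ** (U ** adjoint_mat U)"
    unfolding WF by (simp add: W_def matrix_mul_assoc)
  finally show ?thesis
    by (simp add: UU')
qed

lemma mat_fun_unitary_diag:
  fixes U :: "complex^'n^'n" and d :: "'n \<Rightarrow> real"
  assumes U: "unitary_mat U"
  shows "mat_fun f (U ** diag_mat (\<lambda>i. complex_of_real (d i)) ** adjoint_mat U) =
         U ** diag_mat (\<lambda>i. complex_of_real (f (d i))) ** adjoint_mat U"
proof -
  let ?A = "U ** diag_mat (\<lambda>i. complex_of_real (d i)) ** adjoint_mat U"
  let ?P = "\<lambda>M. \<exists>V (e::'n \<Rightarrow> real). unitary_mat V \<and>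
      ?A = V ** diag_mat (\<lambda>i. complex_of_real (e i)) ** adjoint_mat V \<and>
      M = V ** diag_mat (\<lambda>i. complex_of_real (f (e i))) ** adjoint_mat V"
  have "?P (U ** diag_mat (\<lambda>i. complex_of_real (f (d i))) ** adjoint_mat U)"
    using U by blast
  then have "?P (mat_fun f ?A)"
    unfolding mat_fun_def by (rule someI)
  then obtain V e where "unitary_mat V"
    and "?A = V ** diag_mat (\<lambda>i. complex_of_real (e i)) ** adjoint_mat V"
    and "mat_fun f ?A = V ** diag_mat (\<lambda>i. complex_of_real (f (e i))) ** adjoint_mat V"
    by blast
  then show ?thesis using unitary_diag_conj_fun_unique[OF U, of V d e f] by simp
qed

section \<open>Quadratic forms\<close>

lemma adjoint_mat_adjoint_mat: "adjoint_mat (adjoint_mat A) = A"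
  unfolding adjoint_mat_def by (simp add: vec_eq_iff)

lemma adjoint_mat_mult: "adjoint_mat (A ** B) = adjoint_mat B ** adjoint_mat A"
  unfolding adjoint_mat_def matrix_matrix_mult_def by (simp add: vec_eq_iff mult.commute)

lemma adjoint_mat_real_diag_mat:
  "adjoint_mat (diag_mat (\<lambda>i. complex_of_real (d i))) = diag_mat (\<lambda>i. complex_of_real (d i))"
  unfolding adjoint_mat_def diag_mat_def by (simp add: vec_eq_iff)

lemma qform_add: "qform (X + Y) v = qform X v + qform Y v"
  unfolding qform_def by (simp add: matrix_vector_mult_add_rdistrib sum.distrib ring_distribs)

lemma qform_diff: "qform (X - Y) v = qform X v - qform Y v"
  unfolding qform_def by (simp add: matrix_vector_mult_diff_rdistrib sum_subtractf ring_distribs)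

lemma qform_scaleR: "qform (r *\<^sub>R X) v = of_real r * qform X v"
proof -
  have "(r *\<^sub>R X) *v v = r *\<^sub>R (X *v v)"
    by (simp add: vec_eq_iff matrix_vector_mult_def scaleR_sum_right)
  then show ?thesis
    unfolding qform_def
    by (simp add: vector_scaleR_component) (simp add: scaleR_conv_of_real sum_distrib_left mult.left_commute)
qed

lemma sum_cnj_matrix_vector_adjoint:
  "(\<Sum>i\<in>UNIV. cnj (v $ i) * (U *v y) $ i) = (\<Sum>j\<in>UNIV. cnj ((adjoint_mat U *v v) $ j) * y $ j)"
proof -
  have "(\<Sum>i\<in>UNIV. cnj (v $ i) * (U *v y) $ i) = (\<Sum>i\<in>UNIV. \<Sum>j\<in>UNIV. cnj (v $ i) * U $ i $ j * y $ j)"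
    by (simp add: matrix_vector_mult_def sum_distrib_left mult.assoc)
  also have "\<dots> = (\<Sum>j\<in>UNIV. \<Sum>i\<in>UNIV. cnj (v $ i) * U $ i $ j * y $ j)"
    by (rule sum.swap)
  also have "\<dots> = (\<Sum>j\<in>UNIV. cnj ((adjoint_mat U *v v) $ j) * y $ j)"
    by (simp add: matrix_vector_mult_def adjoint_mat_def sum_distrib_left mult.commute)
  finally show ?thesis .
qed

lemma qform_congruence: "qform (U ** X ** adjoint_mat U) v = qform X (adjoint_mat U *v v)"
  unfolding qform_def
  by (simp add: sum_cnj_matrix_vector_adjoint flip: matrix_vector_mul_assoc)

lemma qform_real_diag_mat:
  "qform (diag_mat (\<lambda>i. complex_of_real (d i))) w = of_real (\<Sum>i\<in>UNIV. d i * (cmod (w $ i))\<^sup>2)"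
  unfolding qform_def diag_mat_def matrix_vector_mult_def
  by (simp add: if_distrib[of "\<lambda>x. _ * x"] complex_norm_square mult_ac cong: if_cong
      flip: of_real_power)

lemma hermitian_unitary_real_diag:
  "hermitian_mat (U ** diag_mat (\<lambda>i. complex_of_real (d i)) ** adjoint_mat U)"
  unfolding hermitian_mat_def adjoint_mat_mult adjoint_mat_adjoint_mat adjoint_mat_real_diag_mat
  by (simp add: matrix_mul_assoc)

lemma posdef_unitary_diag:
  fixes U :: "complex^'n^'n"
  assumes U: "unitary_mat U" and d: "\<And>i. 0 < d i"
  shows "posdef_mat (U ** diag_mat (\<lambda>i. complex_of_real (d i)) ** adjoint_mat U)"
  unfolding posdef_mat_def
proof (intro conjI allI impI hermitian_unitary_real_diag)
  fix v :: "complex^'n" assume "v \<noteq> 0"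
  define w where "w = adjoint_mat U *v v"
  have "U *v w = v"
    using unitary_mat_right_inverse[OF U] by (simp add: w_def matrix_vector_mul_assoc)
  then obtain k where "w $ k \<noteq> 0" using \<open>v \<noteq> 0\<close> by (metis matrix_vector_mult_0_right vec_eq_iff zero_index)
  then have "0 < (\<Sum>i\<in>UNIV. d i * (cmod (w $ i))\<^sup>2)"
    using d by (intro sum_pos2[of _ k]) (auto simp: less_imp_le)
  then show "0 < Re (qform (U ** diag_mat (\<lambda>i. complex_of_real (d i)) ** adjoint_mat U) v)"
    by (simp add: qform_congruence qform_real_diag_mat w_def[symmetric])
qed

section \<open>Real symmetric 2x2 matrices\<close>

definition rot2 :: "real \<Rightarrow> complex^2^2" where
  "rot2 \<theta> = (\<chi> i j. complex_of_real
     (if i = 1 then (if j = 1 then cos \<theta> else - sin \<theta>) else (if j = 1 then sin \<theta> else cos \<theta>)))"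

definition sym2 :: "real \<Rightarrow> real \<Rightarrow> real \<Rightarrow> complex^2^2" where
  "sym2 \<theta> a b =
     rot2 \<theta> ** diag_mat (\<lambda>i. complex_of_real (if i = 1 then a else b)) ** adjoint_mat (rot2 \<theta>)"

definition mat2 :: "real \<Rightarrow> real \<Rightarrow> real \<Rightarrow> real \<Rightarrow> complex^2^2" where
  "mat2 a b c d = (\<chi> i j. complex_of_real
     (if i = 1 then (if j = 1 then a else b) else (if j = 1 then c else d)))"

definition dir2 :: "real \<Rightarrow> complex^2" where
  "dir2 \<theta> = (\<chi> i. complex_of_real (if i = 1 then cos \<theta> else sin \<theta>))"

lemma mat2_eq_iff: "mat2 a b c d = mat2 a' b' c' d' \<longleftrightarrow> a = a' \<and> b = b' \<and> c = c' \<and> d = d'"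
  unfolding mat2_def vec_eq_iff forall_2 by simp

lemma mat2_add: "mat2 a b c d + mat2 a' b' c' d' = mat2 (a + a') (b + b') (c + c') (d + d')"
  unfolding mat2_def by (simp add: vec_eq_iff forall_2)

lemma mat2_scaleR: "r *\<^sub>R mat2 a b c d = mat2 (r * a) (r * b) (r * c) (r * d)"
  unfolding mat2_def by (simp add: vec_eq_iff forall_2 of_real_def)

lemma unitary_rot2: "unitary_mat (rot2 \<theta>)"
  unfolding unitary_mat_def rot2_def adjoint_mat_def
  by (simp add: vec_eq_iff forall_2 matrix_matrix_mult_def sum_2 mat_def
      flip: of_real_mult of_real_add)

lemma mat_fun_sym2: "mat_fun f (sym2 \<theta> a b) = sym2 \<theta> (f a) (f b)"
  unfolding sym2_def mat_fun_unitary_diag[OF unitary_rot2] by (simp add: if_distrib[of f])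

lemma sym2_eq_mat2:
  "sym2 \<theta> a b = mat2 ((a + b) / 2 + (a - b) / 2 * cos (2 * \<theta>)) ((a - b) / 2 * sin (2 * \<theta>))
                       ((a - b) / 2 * sin (2 * \<theta>)) ((a + b) / 2 - (a - b) / 2 * cos (2 * \<theta>))"
proof -
  have "sym2 \<theta> a b = mat2 (a * (cos \<theta>)\<^sup>2 + b * (sin \<theta>)\<^sup>2) ((a - b) * cos \<theta> * sin \<theta>)
                          ((a - b) * cos \<theta> * sin \<theta>) (a * (sin \<theta>)\<^sup>2 + b * (cos \<theta>)\<^sup>2)"
    unfolding sym2_def mat2_def rot2_def adjoint_mat_def diag_mat_def
    by (simp add: vec_eq_iff forall_2 matrix_matrix_mult_def sum_2 power2_eq_square algebra_simps
        flip: of_real_mult of_real_add of_real_diff)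
  also have "\<dots> = mat2 ((a + b) / 2 + (a - b) / 2 * cos (2 * \<theta>)) ((a - b) / 2 * sin (2 * \<theta>))
                       ((a - b) / 2 * sin (2 * \<theta>)) ((a + b) / 2 - (a - b) / 2 * cos (2 * \<theta>))"
    unfolding mat2_eq_iff cos_double_cos sin_double sin_squared_eq by (simp add: field_simps)
  finally show ?thesis .
qed

lemma sym2_0: "sym2 0 a b = mat2 a 0 0 b"
  unfolding sym2_eq_mat2 mat2_eq_iff by (simp add: field_simps)

lemma sym2_pi4: "sym2 (pi / 4) a b = mat2 ((a + b) / 2) ((a - b) / 2) ((a - b) / 2) ((a + b) / 2)"
  unfolding sym2_eq_mat2 by simp

lemma posdef_sym2: "0 < a \<Longrightarrow> 0 < b \<Longrightarrow> posdef_mat (sym2 \<theta> a b)"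
  unfolding sym2_def by (rule posdef_unitary_diag[OF unitary_rot2]) simp

lemma adjoint_rot2_dir2: "adjoint_mat (rot2 \<theta>) *v dir2 \<phi> = dir2 (\<phi> - \<theta>)"
  unfolding rot2_def dir2_def adjoint_mat_def
  by (simp add: vec_eq_iff forall_2 matrix_vector_mult_def sum_2 cos_diff sin_diff algebra_simps
      flip: of_real_mult of_real_add of_real_diff)

lemma qform_sym2_dir2:
  "qform (sym2 \<theta> a b) (dir2 \<phi>) = complex_of_real (a * (cos (\<phi> - \<theta>))\<^sup>2 + b * (sin (\<phi> - \<theta>))\<^sup>2)"
  unfolding sym2_def qform_congruence adjoint_rot2_dir2 qform_real_diag_mat
  by (simp add: sum_2 dir2_def)

lemma qform_sym2_dir2_second_axis: "qform (sym2 \<theta> a b) (dir2 (\<theta> + pi / 2)) = complex_of_real b"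
  unfolding qform_sym2_dir2 by simp

lemma sym2_min_eigenvalue_le_qform:
  assumes "b \<le> a" shows "b \<le> Re (qform (sym2 \<theta> a b) (dir2 \<phi>))"
proof -
  have "b = b * (cos (\<phi> - \<theta>))\<^sup>2 + b * (sin (\<phi> - \<theta>))\<^sup>2"
    by (simp flip: distrib_left)
  also have "\<dots> \<le> a * (cos (\<phi> - \<theta>))\<^sup>2 + b * (sin (\<phi> - \<theta>))\<^sup>2"
    using assms by (simp add: mult_right_mono)
  finally show ?thesis
    by (simp add: qform_sym2_dir2)
qed

lemma mat2_symmetric_spectral:
  obtains \<theta> \<mu>\<^sub>1 \<mu>\<^sub>2 where "mat2 a b b d = sym2 \<theta> \<mu>\<^sub>1 \<mu>\<^sub>2" "\<mu>\<^sub>1 + \<mu>\<^sub>2 = a + d"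
    "(\<mu>\<^sub>1 - \<mu>\<^sub>2) * cos (2 * \<theta>) = a - d" "(\<mu>\<^sub>1 - \<mu>\<^sub>2) * sin (2 * \<theta>) = 2 * b" "\<mu>\<^sub>2 \<le> \<mu>\<^sub>1"
proof -
  define z where "z = Complex ((a - d) / 2) b"
  have polar: "cmod z * cos (Arg z) = (a - d) / 2" "cmod z * sin (Arg z) = b"
    using arg_cong[OF rcis_cmod_Arg[of z], of Re] arg_cong[OF rcis_cmod_Arg[of z], of Im]
    by (simp_all add: z_def)
  define \<mu>\<^sub>1 where "\<mu>\<^sub>1 = (a + d) / 2 + cmod z"
  define \<mu>\<^sub>2 where "\<mu>\<^sub>2 = (a + d) / 2 - cmod z"
  have "mat2 a b b d = sym2 (Arg z / 2) \<mu>\<^sub>1 \<mu>\<^sub>2"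
    unfolding sym2_eq_mat2 mat2_eq_iff using polar by (simp add: \<mu>\<^sub>1_def \<mu>\<^sub>2_def field_simps)
  moreover have "(\<mu>\<^sub>1 - \<mu>\<^sub>2) * cos (2 * (Arg z / 2)) = a - d" "(\<mu>\<^sub>1 - \<mu>\<^sub>2) * sin (2 * (Arg z / 2)) = 2 * b"
    using polar by (simp_all add: \<mu>\<^sub>1_def \<mu>\<^sub>2_def)
  ultimately show ?thesis
    using that[of "Arg z / 2" \<mu>\<^sub>1 \<mu>\<^sub>2] by (simp add: \<mu>\<^sub>1_def \<mu>\<^sub>2_def)
qed

lemma mat2_symmetric_eigenangle_near_0:
  assumes "d < a" and "8 * \<bar>b\<bar> \<le> a - d"
  obtains \<theta> \<mu>\<^sub>1 \<mu>\<^sub>2 where "mat2 a b b d = sym2 \<theta> \<mu>\<^sub>1 \<mu>\<^sub>2" "a \<le> \<mu>\<^sub>1" "\<bar>sin (2 * \<theta>)\<bar> \<le> 1 / 4"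
proof -
  obtain \<theta> \<mu>\<^sub>1 \<mu>\<^sub>2 where eq: "mat2 a b b d = sym2 \<theta> \<mu>\<^sub>1 \<mu>\<^sub>2" and trace: "\<mu>\<^sub>1 + \<mu>\<^sub>2 = a + d"
    and cos: "(\<mu>\<^sub>1 - \<mu>\<^sub>2) * cos (2 * \<theta>) = a - d" and sin: "(\<mu>\<^sub>1 - \<mu>\<^sub>2) * sin (2 * \<theta>) = 2 * b"
    and ordered: "\<mu>\<^sub>2 \<le> \<mu>\<^sub>1"
    by (rule mat2_symmetric_spectral)
  have gap: "a - d \<le> \<mu>\<^sub>1 - \<mu>\<^sub>2"
    using mult_left_le[OF cos_le_one, of "\<mu>\<^sub>1 - \<mu>\<^sub>2" "2 * \<theta>"] cos ordered by simp
  have "\<bar>sin (2 * \<theta>)\<bar> * (a - d) \<le> \<bar>sin (2 * \<theta>)\<bar> * (\<mu>\<^sub>1 - \<mu>\<^sub>2)"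
    using gap by (simp add: mult_left_mono)
  also have "\<dots> = 2 * \<bar>b\<bar>"
    using arg_cong[OF sin, of abs] ordered by (simp add: abs_mult mult.commute)
  also have "\<dots> \<le> 1 / 4 * (a - d)"
    using assms(2) by simp
  finally have "\<bar>sin (2 * \<theta>)\<bar> \<le> 1 / 4"
    using assms(1) by (simp add: mult_le_cancel_right)
  moreover have "a \<le> \<mu>\<^sub>1"
    using gap trace by linarith
  ultimately show ?thesis
    using that eq by blast
qed

lemma mat2_symmetric_eigenangle_near_pi4:
  assumes "b \<noteq> 0" and "2 * \<bar>a - d\<bar> \<le> \<bar>b\<bar>"
  obtains \<theta> \<mu>\<^sub>1 \<mu>\<^sub>2 where "mat2 a b b d = sym2 \<theta> \<mu>\<^sub>1 \<mu>\<^sub>2" "\<mu>\<^sub>2 \<le> \<mu>\<^sub>1" "\<bar>cos (2 * \<theta>)\<bar> \<le> 1 / 4"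
proof -
  obtain \<theta> \<mu>\<^sub>1 \<mu>\<^sub>2 where eq: "mat2 a b b d = sym2 \<theta> \<mu>\<^sub>1 \<mu>\<^sub>2"
    and cos: "(\<mu>\<^sub>1 - \<mu>\<^sub>2) * cos (2 * \<theta>) = a - d" and sin: "(\<mu>\<^sub>1 - \<mu>\<^sub>2) * sin (2 * \<theta>) = 2 * b"
    and ordered: "\<mu>\<^sub>2 \<le> \<mu>\<^sub>1"
    by (rule mat2_symmetric_spectral)
  have "2 * \<bar>b\<bar> = (\<mu>\<^sub>1 - \<mu>\<^sub>2) * \<bar>sin (2 * \<theta>)\<bar>"
    using arg_cong[OF sin, of abs] ordered by (simp add: abs_mult)
  also have "\<dots> \<le> \<mu>\<^sub>1 - \<mu>\<^sub>2"
    using ordered by (simp add: mult_left_le)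
  finally have gap: "2 * \<bar>b\<bar> \<le> \<mu>\<^sub>1 - \<mu>\<^sub>2" .
  have "\<bar>cos (2 * \<theta>)\<bar> * (\<mu>\<^sub>1 - \<mu>\<^sub>2) = \<bar>a - d\<bar>"
    using arg_cong[OF cos, of abs] ordered by (simp add: abs_mult mult.commute)
  also have "\<dots> \<le> 1 / 4 * (\<mu>\<^sub>1 - \<mu>\<^sub>2)"
    using assms(2) gap by simp
  finally have "\<bar>cos (2 * \<theta>)\<bar> * (\<mu>\<^sub>1 - \<mu>\<^sub>2) \<le> 1 / 4 * (\<mu>\<^sub>1 - \<mu>\<^sub>2)" .
  moreover have "0 < \<mu>\<^sub>1 - \<mu>\<^sub>2"
    using gap assms(1) by linarith
  ultimately have "\<bar>cos (2 * \<theta>)\<bar> \<le> 1 / 4"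
    by (simp only: mult_le_cancel_right_pos)
  then show ?thesis
    using that eq ordered by blast
qed

section \<open>The counterexample\<close>

lemma sin_diff_square_ge_quarter:
  fixes x y :: real
  assumes "\<bar>cos (2 * x)\<bar> \<le> 1 / 4" and "\<bar>sin (2 * y)\<bar> \<le> 1 / 4"
  shows "1 / 4 \<le> (sin (x - y))\<^sup>2"
proof -
  have "cos (2 * x) * cos (2 * y) \<le> \<bar>cos (2 * x)\<bar> * \<bar>cos (2 * y)\<bar>"
    using abs_ge_self[of "cos (2 * x) * cos (2 * y)"] by (simp only: abs_mult)
  also have "\<dots> \<le> \<bar>cos (2 * x)\<bar>"
    by (rule mult_left_le) simp_all
  moreover have "sin (2 * x) * sin (2 * y) \<le> \<bar>sin (2 * x)\<bar> * \<bar>sin (2 * y)\<bar>"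
    using abs_ge_self[of "sin (2 * x) * sin (2 * y)"] by (simp only: abs_mult)
  moreover have "\<bar>sin (2 * x)\<bar> * \<bar>sin (2 * y)\<bar> \<le> \<bar>sin (2 * y)\<bar>"
    by (rule mult_left_le_one_le) simp_all
  moreover have "1 - 2 * (sin (x - y))\<^sup>2 = cos (2 * x) * cos (2 * y) + sin (2 * x) * sin (2 * y)"
    using cos_diff[of "2 * x" "2 * y"] by (simp add: right_diff_distrib flip: cos_double_sin)
  ultimately show ?thesis
    using assms by linarith
qed

lemma not_loewner_le_mat_exp_mat_powr_sym2:
  assumes "s\<^sub>2 powr p < exp z\<^sub>1 * (sin (\<theta>\<^sub>S - \<theta>\<^sub>Z))\<^sup>2"
  shows "\<not> loewner_le (mat_exp (sym2 \<theta>\<^sub>Z z\<^sub>1 z\<^sub>2)) (mat_powr (sym2 \<theta>\<^sub>S s\<^sub>1 s\<^sub>2) p)"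
proof
  define v where "v = dir2 (\<theta>\<^sub>S + pi / 2)"
  assume "loewner_le (mat_exp (sym2 \<theta>\<^sub>Z z\<^sub>1 z\<^sub>2)) (mat_powr (sym2 \<theta>\<^sub>S s\<^sub>1 s\<^sub>2) p)"
  then have "Re (qform (mat_exp (sym2 \<theta>\<^sub>Z z\<^sub>1 z\<^sub>2)) v) \<le> Re (qform (mat_powr (sym2 \<theta>\<^sub>S s\<^sub>1 s\<^sub>2) p) v)"
    unfolding loewner_le_def psd_mat_def qform_diff by (metis diff_ge_0_iff_ge minus_complex.sel(1))
  also have "\<dots> = s\<^sub>2 powr p"
    unfolding v_def mat_powr_def mat_fun_sym2 qform_sym2_dir2_second_axis by simp
  also have "\<dots> < exp z\<^sub>1 * (sin (\<theta>\<^sub>S - \<theta>\<^sub>Z))\<^sup>2"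
    by (fact assms)
  also have "\<dots> \<le> Re (qform (mat_exp (sym2 \<theta>\<^sub>Z z\<^sub>1 z\<^sub>2)) v)"
  proof -
    have "cos (\<theta>\<^sub>S + pi / 2 - \<theta>\<^sub>Z) = - sin (\<theta>\<^sub>S - \<theta>\<^sub>Z)"
      using minus_sin_cos_eq[of "\<theta>\<^sub>S - \<theta>\<^sub>Z"] by (simp add: algebra_simps)
    then show ?thesis
      unfolding v_def mat_exp_def mat_fun_sym2 qform_sym2_dir2 by simp
  qed
  finally show False by simp
qed

lemma LE_mean_sym2:
  "LE_mean \<alpha> (sym2 \<theta> a\<^sub>1 a\<^sub>2) (sym2 \<phi> b\<^sub>1 b\<^sub>2) =
     mat_exp ((1 - \<alpha>) *\<^sub>R sym2 \<theta> (ln a\<^sub>1) (ln a\<^sub>2) + \<alpha> *\<^sub>R sym2 \<phi> (ln b\<^sub>1) (ln b\<^sub>2))"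
  unfolding LE_mean_def mat_log_def mat_fun_sym2 ..

lemma power_mean_sym2:
  "power_mean \<alpha> q (sym2 \<theta> a\<^sub>1 a\<^sub>2) (sym2 \<phi> b\<^sub>1 b\<^sub>2) =
     mat_powr ((1 - \<alpha>) *\<^sub>R sym2 \<theta> (a\<^sub>1 powr q) (a\<^sub>2 powr q) + \<alpha> *\<^sub>R sym2 \<phi> (b\<^sub>1 powr q) (b\<^sub>2 powr q)) (1 / q)"
  unfolding power_mean_def mat_powr_def mat_fun_sym2 ..

lemma weighted_sum_sym2_0_pi4_min_eigenvalue:
  fixes \<alpha> \<epsilon> b\<^sub>1 b\<^sub>2 :: real
  assumes S: "(1 - \<alpha>) *\<^sub>R sym2 0 1 \<epsilon> + \<alpha> *\<^sub>R sym2 (pi / 4) b\<^sub>1 b\<^sub>2 = sym2 \<theta> \<mu>\<^sub>1 \<mu>\<^sub>2" "\<mu>\<^sub>2 \<le> \<mu>\<^sub>1"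
    and "0 \<le> \<alpha>" "\<alpha> \<le> 1" "0 < \<epsilon>" "\<epsilon> \<le> 1" "0 < b\<^sub>2" "b\<^sub>2 < b\<^sub>1" "\<alpha> * b\<^sub>2 \<le> 1"
  shows "0 \<le> \<mu>\<^sub>2" and "\<mu>\<^sub>2 \<le> 2"
proof -
  have rayleigh: "Re (qform (sym2 \<theta> \<mu>\<^sub>1 \<mu>\<^sub>2) (dir2 \<phi>)) =
      (1 - \<alpha>) * ((cos \<phi>)\<^sup>2 + \<epsilon> * (sin \<phi>)\<^sup>2) + \<alpha> * (b\<^sub>1 * (cos (\<phi> - pi / 4))\<^sup>2 + b\<^sub>2 * (sin (\<phi> - pi / 4))\<^sup>2)"
    for \<phi>
    unfolding S(1)[symmetric] qform_add qform_scaleR qform_sym2_dir2 by simp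
  have "\<mu>\<^sub>2 = Re (qform (sym2 \<theta> \<mu>\<^sub>1 \<mu>\<^sub>2) (dir2 (\<theta> + pi / 2)))"
    by (simp add: qform_sym2_dir2_second_axis)
  also have "\<dots> \<ge> 0"
    unfolding rayleigh using assms by (intro add_nonneg_nonneg mult_nonneg_nonneg) auto
  finally show "0 \<le> \<mu>\<^sub>2" .
  have "\<mu>\<^sub>2 \<le> Re (qform (sym2 \<theta> \<mu>\<^sub>1 \<mu>\<^sub>2) (dir2 (- (pi / 4))))"
    using S(2) by (rule sym2_min_eigenvalue_le_qform)
  also have "\<dots> = (1 - \<alpha>) * ((1 + \<epsilon>) / 2) + \<alpha> * b\<^sub>2"
    unfolding rayleigh by (simp add: cos_45 sin_45 power_divide field_simps)
  also have "\<dots> \<le> 2"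
    using mult_le_one[of "1 - \<alpha>" "(1 + \<epsilon>) / 2"] assms by auto
  finally show "\<mu>\<^sub>2 \<le> 2" .
qed

lemma weighted_sum_sym2_0_pi4_spectral_bounds:
  fixes \<alpha> \<epsilon> b\<^sub>1 b\<^sub>2 :: real
  assumes "0 \<le> \<alpha>" "\<alpha> \<le> 1" "0 < \<epsilon>" "\<epsilon> \<le> 1" "0 < b\<^sub>2" "\<alpha> * b\<^sub>2 \<le> 1" "4 \<le> \<alpha> * (b\<^sub>1 - b\<^sub>2)"
  obtains \<theta> \<mu>\<^sub>1 \<mu>\<^sub>2
  where "(1 - \<alpha>) *\<^sub>R sym2 0 1 \<epsilon> + \<alpha> *\<^sub>R sym2 (pi / 4) b\<^sub>1 b\<^sub>2 = sym2 \<theta> \<mu>\<^sub>1 \<mu>\<^sub>2"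
    "\<bar>cos (2 * \<theta>)\<bar> \<le> 1 / 4" "0 \<le> \<mu>\<^sub>2" "\<mu>\<^sub>2 \<le> 2"
proof -
  let ?S = "(1 - \<alpha>) *\<^sub>R sym2 0 1 \<epsilon> + \<alpha> *\<^sub>R sym2 (pi / 4) b\<^sub>1 b\<^sub>2"
  let ?a = "1 - \<alpha> + \<alpha> * (b\<^sub>1 + b\<^sub>2) / 2" and ?b = "\<alpha> * (b\<^sub>1 - b\<^sub>2) / 2"
    and ?d = "(1 - \<alpha>) * \<epsilon> + \<alpha> * (b\<^sub>1 + b\<^sub>2) / 2"
  have S_mat2: "?S = mat2 ?a ?b ?b ?d"
    by (simp add: sym2_0 sym2_pi4 mat2_scaleR mat2_add mat2_eq_iff algebra_simps)
  have "?a - ?d = (1 - \<alpha>) * (1 - \<epsilon>)"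
    by (simp add: algebra_simps)
  moreover have "(1 - \<alpha>) * (1 - \<epsilon>) \<le> 1"
    using assms by (intro mult_le_one) auto
  ultimately have "2 * \<bar>?a - ?d\<bar> \<le> \<bar>?b\<bar>" and "?b \<noteq> 0"
    using assms by auto
  then obtain \<theta> \<mu>\<^sub>1 \<mu>\<^sub>2 where S: "?S = sym2 \<theta> \<mu>\<^sub>1 \<mu>\<^sub>2" "\<mu>\<^sub>2 \<le> \<mu>\<^sub>1" "\<bar>cos (2 * \<theta>)\<bar> \<le> 1 / 4"
    using mat2_symmetric_eigenangle_near_pi4 unfolding S_mat2 by blast
  have "b\<^sub>2 < b\<^sub>1"
    using assms(1,7) by (smt (verit) mult_nonneg_nonpos)
  then have "0 \<le> \<mu>\<^sub>2" "\<mu>\<^sub>2 \<le> 2"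
    using weighted_sum_sym2_0_pi4_min_eigenvalue[OF S(1,2)] assms by simp_all
  with S show ?thesis
    using that by blast
qed

lemma exp_spread_exists:
  fixes \<alpha> q m :: real
  assumes "0 < \<alpha>" and "0 < q"
  obtains t where "0 < t" "\<alpha> * exp (q * (m - t)) \<le> 1" "4 \<le> \<alpha> * (exp (q * (m + t)) - exp (q * (m - t)))"
proof -
  define u where "u = \<alpha> * exp (q * m)"
  define E where "E = u + 5 / u"
  have u: "0 < u"
    using assms by (simp add: u_def)
  then have "u \<le> E"
    by (simp add: E_def)
  have "1 < E"
  proof (cases "1 \<le> u")
    case True
    moreover have "0 < 5 / u" using u by simp
    ultimately show ?thesis unfolding E_def by linarith
  next
    case False
    then have "5 < 5 / u" using u by (simp add: field_simps)
    then show ?thesis using u by (simp add: E_def)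
  qed
  define t where "t = ln E / q"
  have "exp (q * t) = E"
    using assms \<open>1 < E\<close> by (simp add: t_def)
  then have plus: "\<alpha> * exp (q * (m + t)) = u * E" and minus: "\<alpha> * exp (q * (m - t)) = u / E"
    by (simp_all add: u_def distrib_left right_diff_distrib exp_add exp_diff)
  have "u / E \<le> 1"
    using \<open>u \<le> E\<close> u by simp
  have "u * E = u\<^sup>2 + 5"
    using u by (simp add: E_def power2_eq_square field_simps)
  show ?thesis
  proof (rule that)
    show "0 < t"
      using assms \<open>1 < E\<close> by (simp add: t_def)
    show "\<alpha> * exp (q * (m - t)) \<le> 1"
      unfolding minus by (fact \<open>u / E \<le> 1\<close>)
    show "4 \<le> \<alpha> * (exp (q * (m + t)) - exp (q * (m - t)))"
      unfolding right_diff_distrib[of \<alpha>] plus minus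
      using \<open>u / E \<le> 1\<close> \<open>u * E = u\<^sup>2 + 5\<close> zero_le_power2[of u] by linarith
  qed
qed

lemma LE_mean_not_le_power_mean_sym2_0_pi4:
  fixes \<alpha> q m t L :: real
  assumes "0 < \<alpha>" "\<alpha> < 1" "0 < q" "0 < t" "(1 - \<alpha>) * L = 8 * \<alpha> * t"
    and "\<alpha> * exp (q * (m - t)) \<le> 1" "4 \<le> \<alpha> * (exp (q * (m + t)) - exp (q * (m - t)))"
    and "4 * 2 powr (1 / q) < exp (\<alpha> * m)"
  defines "A \<equiv> sym2 0 1 (exp (- L))" and "B \<equiv> sym2 (pi / 4) (exp (m + t)) (exp (m - t))"
  shows "\<not> loewner_le (LE_mean \<alpha> A B) (power_mean \<alpha> q A B)"
proof -
  let ?Z = "mat2 (\<alpha> * m) (\<alpha> * t) (\<alpha> * t) (\<alpha> * m - (1 - \<alpha>) * L)"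
  let ?S = "(1 - \<alpha>) *\<^sub>R sym2 0 1 (exp (- (q * L))) + \<alpha> *\<^sub>R sym2 (pi / 4) (exp (q * (m + t))) (exp (q * (m - t)))"
  have "(1 - \<alpha>) *\<^sub>R sym2 0 (ln 1) (ln (exp (- L))) + \<alpha> *\<^sub>R sym2 (pi / 4) (ln (exp (m + t))) (ln (exp (m - t))) = ?Z"
    by (simp add: sym2_0 sym2_pi4 mat2_scaleR mat2_add mat2_eq_iff algebra_simps)
  then have LE: "LE_mean \<alpha> A B = mat_exp ?Z"
    unfolding A_def B_def LE_mean_sym2 by simp
  have PM: "power_mean \<alpha> q A B = mat_powr ?S (1 / q)"
    unfolding A_def B_def power_mean_sym2 by (simp add: exp_powr_real mult.commute)
  have "\<alpha> * m - (1 - \<alpha>) * L < \<alpha> * m" "8 * \<bar>\<alpha> * t\<bar> \<le> \<alpha> * m - (\<alpha> * m - (1 - \<alpha>) * L)"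
    using assms by (simp_all add: abs_mult)
  then obtain \<theta>\<^sub>Z z\<^sub>1 z\<^sub>2 where Z: "?Z = sym2 \<theta>\<^sub>Z z\<^sub>1 z\<^sub>2" "\<alpha> * m \<le> z\<^sub>1" "\<bar>sin (2 * \<theta>\<^sub>Z)\<bar> \<le> 1 / 4"
    using mat2_symmetric_eigenangle_near_0 by blast
  have "0 < L"
    using assms(1,2,4,5) zero_less_mult_iff[of "1 - \<alpha>" L] by auto
  then have \<alpha>: "0 \<le> \<alpha>" "\<alpha> \<le> 1" and \<epsilon>: "0 < exp (- (q * L))" "exp (- (q * L)) \<le> 1"
    using assms by simp_all
  obtain \<theta>\<^sub>S s\<^sub>1 s\<^sub>2 where S: "?S = sym2 \<theta>\<^sub>S s\<^sub>1 s\<^sub>2" "\<bar>cos (2 * \<theta>\<^sub>S)\<bar> \<le> 1 / 4" "0 \<le> s\<^sub>2" "s\<^sub>2 \<le> 2"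
    using weighted_sum_sym2_0_pi4_spectral_bounds[OF \<alpha> \<epsilon> exp_gt_zero assms(6,7)] by blast
  have "s\<^sub>2 powr (1 / q) \<le> 2 powr (1 / q)"
    using S assms by (intro powr_mono2) auto
  also have "\<dots> < exp (\<alpha> * m) * (1 / 4)"
    using assms(8) by simp
  also have "\<dots> \<le> exp z\<^sub>1 * (sin (\<theta>\<^sub>S - \<theta>\<^sub>Z))\<^sup>2"
    using Z(2) sin_diff_square_ge_quarter[OF S(2) Z(3)] by (intro mult_mono) auto
  finally show ?thesis
    unfolding LE PM Z(1) S(1) by (rule not_loewner_le_mat_exp_mat_powr_sym2)
qed

theorem theorem4p5:
  fixes \<alpha> q :: real
  assumes "0 < \<alpha>" and "\<alpha> < 1" and "0 < q"
  shows "\<exists>A B :: complex^2^2. posdef_mat A \<and> posdef_mat B \<and>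
           \<not> loewner_le (LE_mean \<alpha> A B) (power_mean \<alpha> q A B)"
proof -
  define m where "m = ln (8 * 2 powr (1 / q)) / \<alpha>"
  obtain t where t: "0 < t" "\<alpha> * exp (q * (m - t)) \<le> 1" "4 \<le> \<alpha> * (exp (q * (m + t)) - exp (q * (m - t)))"
    using exp_spread_exists[OF assms(1,3)] by blast
  define L where "L = 8 * \<alpha> * t / (1 - \<alpha>)"
  have "(1 - \<alpha>) * L = 8 * \<alpha> * t" and "4 * 2 powr (1 / q) < exp (\<alpha> * m)"
    using assms by (simp_all add: L_def m_def)
  then have "\<not> loewner_le (LE_mean \<alpha> (sym2 0 1 (exp (- L))) (sym2 (pi / 4) (exp (m + t)) (exp (m - t))))
      (power_mean \<alpha> q (sym2 0 1 (exp (- L))) (sym2 (pi / 4) (exp (m + t)) (exp (m - t))))"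
    using LE_mean_not_le_power_mean_sym2_0_pi4 assms t by blast
  moreover have "posdef_mat (sym2 0 1 (exp (- L)))" "posdef_mat (sym2 (pi / 4) (exp (m + t)) (exp (m - t)))"
    by (simp_all add: posdef_sym2)
  ultimately show ?thesis
    by blast
qed

end
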